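(* Let \(\mathcal{I}\) be an instance of 3-SAT and let \(G(\mathcal{I})\), \(T(\mathcal{I})\) be as constructed below. If an MNS ordering or an MCS ordering \(\sigma\) of \(G(\mathcal{I})\) has \(\mathcal{F}\)-tree \(T(\mathcal{I})\), then in \(\sigma\) the vertex \(b\) appears before every clause vertex \(c_i\).
   Context: Let \(\mathcal{I}\) have variables \(x_1,\dots,x_k\) and clauses \(C_1,\dots,C_l\), each a disjunction of three literals. \(G(\mathcal{I})\) has vertices: literal vertices \(X=\{x_1,\dots,x_k,\overline{x_1},\dots,\overline{x_k}\}\), clause vertices \(c_1,\dots,c_l\), and six vertices \(r,p,q,a,b,t\). Edges: any two vertices of \(X\) are adjacent except the pairs \(x_j\overline{x_j}\); the clause vertices are pairwise nonadjacent; \(c_i\) is adjacent to every vertex of \(X\) except the three literal vertices of the literals of \(C_i\); each of \(r,p,q,a\) is adjacent to all literal vertices and all clause vertices; \(b\) is adjacent to all literal vertices; additionally the edges \(ab,ap,aq,bq,br,bt,pr,qr,qt\); no other edges. \(T(\mathcal{I})\) is the spanning tree consisting of all edges of \(G(\mathcal{I})\) incident to \(r\) together with the edges \(pa\) and \(bt\). With \(n\) the number of vertices: an MCS ordering is produced by repeatedly choosing an unnumbered vertex with the largest number of numbered neighbors; an MNS ordering uses set labels (all \(\emptyset\), start vertex gets \(\{n+1\}\); repeatedly pick an unnumbered vertex with inclusion-maximal label as \(v_j\) and add \(j\) to the labels of its unnumbered neighbors); ties are arbitrary. The \(\mathcal{F}\)-tree of an ordering \((v_1,\dots,v_n)\)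 has, for each \(v\ne v_1\), an edge from \(v\) to its leftmost neighbor in the ordering. *)

theory Defs
  imports Main
begin

text \<open>A graph is given by a vertex set V and a symmetric adjacency predicate adj.
An ordering is a list enumerating V without repetition; position 0 is v_1.\<close>

definition is_ordering :: "'v set \<Rightarrow> 'v list \<Rightarrow> bool" where
  "is_ordering V \<sigma> \<longleftrightarrow> distinct \<sigma> \<and> set \<sigma> = V"

definition numbered_nbrs :: "('v \<Rightarrow> 'v \<Rightarrow> bool) \<Rightarrow> 'v list \<Rightarrow> nat \<Rightarrow> 'v \<Rightarrow> nat set" where
  "numbered_nbrs adj \<sigma> j w = {i. i < j \<and> adj w (\<sigma> ! i)}"

definition is_MCS :: "'v set \<Rightarrow> ('v \<Rightarrow> 'v \<Rightarrow> bool) \<Rightarrow> 'v list \<Rightarrow> bool" where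
  "is_MCS V adj \<sigma> \<longleftrightarrow> is_ordering V \<sigma> \<and>
     (\<forall>j < length \<sigma>. \<forall>w \<in> V - set (take j \<sigma>).
        card (numbered_nbrs adj \<sigma> j w) \<le> card (numbered_nbrs adj \<sigma> j (\<sigma> ! j)))"

text \<open>MNS: the label of an unnumbered vertex before step j is the set of positions of its
numbered neighbours (the extra element n+1 of the start vertex only matters at step 1,
where it just allows an arbitrary start vertex).\<close>
definition is_MNS :: "'v set \<Rightarrow> ('v \<Rightarrow> 'v \<Rightarrow> bool) \<Rightarrow> 'v list \<Rightarrow> bool" where
  "is_MNS V adj \<sigma> \<longleftrightarrow> is_ordering V \<sigma> \<and>
     (\<forall>j < length \<sigma>. \<forall>w \<in> V - set (take j \<sigma>).
        \<not> (numbered_nbrs adj \<sigma> j (\<sigma> ! j) \<subset> numbered_nbrs adj \<sigma> j w))"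

definition leftmost_nbr :: "('v \<Rightarrow> 'v \<Rightarrow> bool) \<Rightarrow> 'v list \<Rightarrow> 'v \<Rightarrow> 'v" where
  "leftmost_nbr adj \<sigma> v = \<sigma> ! (LEAST i. i < length \<sigma> \<and> adj v (\<sigma> ! i))"

definition F_tree :: "('v \<Rightarrow> 'v \<Rightarrow> bool) \<Rightarrow> 'v list \<Rightarrow> 'v set set" where
  "F_tree adj \<sigma> = {{v, leftmost_nbr adj \<sigma> v} | v. v \<in> set \<sigma> \<and> v \<noteq> hd \<sigma>}"

datatype vert = Pos nat | Neg nat | Cl nat | Rv | Pv | Qv | Av | Bv | Tv

type_synonym literal = "nat \<times> bool"

fun lit_vert :: "literal \<Rightarrow> vert" where
  "lit_vert (j, True) = Pos j"
| "lit_vert (j, False) = Neg j"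

definition sat3_instance :: "nat \<Rightarrow> nat \<Rightarrow> (nat \<Rightarrow> literal list) \<Rightarrow> bool" where
  "sat3_instance k l C \<longleftrightarrow>
     (\<forall>i \<in> {1..l}. length (C i) = 3 \<and> (\<forall>(j, s) \<in> set (C i). j \<in> {1..k}))"

definition lit_verts :: "nat \<Rightarrow> vert set" where
  "lit_verts k = Pos ` {1..k} \<union> Neg ` {1..k}"

definition cl_verts :: "nat \<Rightarrow> vert set" where
  "cl_verts l = Cl ` {1..l}"

definition GV :: "nat \<Rightarrow> nat \<Rightarrow> vert set" where
  "GV k l = lit_verts k \<union> cl_verts l \<union> {Rv, Pv, Qv, Av, Bv, Tv}"

fun complementary :: "vert \<Rightarrow> vert \<Rightarrow> bool" where
  "complementary (Pos j) (Neg j') = (j = j')"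
| "complementary (Neg j) (Pos j') = (j = j')"
| "complementary _ _ = False"

text \<open>One direction of the edge set; adjacency is its symmetric closure on GV.\<close>
definition E0 :: "nat \<Rightarrow> nat \<Rightarrow> (nat \<Rightarrow> literal list) \<Rightarrow> vert \<Rightarrow> vert \<Rightarrow> bool" where
  "E0 k l C u v \<longleftrightarrow>
     (u \<in> lit_verts k \<and> v \<in> lit_verts k \<and> u \<noteq> v \<and> \<not> complementary u v)
   \<or> (\<exists>i \<in> {1..l}. u = Cl i \<and> v \<in> lit_verts k \<and> v \<notin> lit_vert ` set (C i))
   \<or> (u \<in> {Rv, Pv, Qv, Av} \<and> v \<in> lit_verts k \<union> cl_verts l)
   \<or> (u = Bv \<and> v \<in> lit_verts k)
   \<or> (u, v) \<in> {(Av, Bv), (Av, Pv), (Av, Qv), (Bv, Qv), (Bv, Rv), (Bv, Tv),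
                (Pv, Rv), (Qv, Rv), (Qv, Tv)}"

definition Gadj :: "nat \<Rightarrow> nat \<Rightarrow> (nat \<Rightarrow> literal list) \<Rightarrow> vert \<Rightarrow> vert \<Rightarrow> bool" where
  "Gadj k l C u v \<longleftrightarrow> u \<in> GV k l \<and> v \<in> GV k l \<and> (E0 k l C u v \<or> E0 k l C v u)"

definition Ttree :: "nat \<Rightarrow> nat \<Rightarrow> (nat \<Rightarrow> literal list) \<Rightarrow> vert set set" where
  "Ttree k l C = {{Rv, v} | v. Gadj k l C Rv v} \<union> {{Pv, Av}, {Bv, Tv}}"

end

theory Submission
  imports Defs
begin

text \<open>In T(I) the only edge at t is bt, and t is not the start vertex of the
ordering (otherwise q, a neighbour of t, would be attached to t). Hence b is the leftmost
neighbour of t, so b precedes its neighbour q. Every neighbour of b other than q is a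
neighbour of q, so when b is numbered its label is contained in that of q; a clause vertex
numbered before b would be a neighbour of q but not of b, making the label of q strictly
larger, which neither MNS nor MCS allows.\<close>

lemma MCS_imp_MNS:
  assumes "is_MCS V adj \<sigma>"
  shows "is_MNS V adj \<sigma>"
proof -
  have "finite (numbered_nbrs adj \<sigma> j w)" for j w
    by (simp add: numbered_nbrs_def)
  with assms show ?thesis
    unfolding is_MCS_def is_MNS_def by (meson leD psubset_card_mono)
qed

text \<open>When the dominated vertex is numbered, its label is contained in the label of the later
vertex, so inclusion-maximality forces the two labels to agree.\<close>
lemma MNS_dominated_vertex_nbrs:
  assumes "is_MNS V adj \<sigma>" and "a < p" "p < length \<sigma>"
    and dom: "\<And>x. adj (\<sigma> ! a) x \<Longrightarrow> x \<noteq> \<sigma> ! p \<Longrightarrow> adj (\<sigma> ! p) x"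
    and "c < a" "adj (\<sigma> ! p) (\<sigma> ! c)"
  shows "adj (\<sigma> ! a) (\<sigma> ! c)"
proof (rule ccontr)
  assume nadj: "\<not> adj (\<sigma> ! a) (\<sigma> ! c)"
  have dist: "distinct \<sigma>" and V: "set \<sigma> = V"
    using assms(1) by (auto simp: is_MNS_def is_ordering_def)
  have before_p: "\<sigma> ! x \<noteq> \<sigma> ! p" if "x < a" for x
    using that \<open>a < p\<close> \<open>p < length \<sigma>\<close> dist by (simp add: nth_eq_iff_index_eq)
  have "\<sigma> ! p \<in> V - set (take a \<sigma>)"
    using before_p \<open>p < length \<sigma>\<close> V by (auto simp: in_set_conv_nth)
  moreover have "numbered_nbrs adj \<sigma> a (\<sigma> ! a) \<subset> numbered_nbrs adj \<sigma> a (\<sigma> ! p)"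
    using dom before_p nadj assms(5,6) by (auto simp: numbered_nbrs_def)
  ultimately show False
    using assms(1-3) unfolding is_MNS_def by auto
qed

lemma leftmost_nbr_before:
  assumes "i < length \<sigma>" "adj v (\<sigma> ! i)"
  obtains m where "m \<le> i" "leftmost_nbr adj \<sigma> v = \<sigma> ! m"
proof
  let ?P = "\<lambda>i. i < length \<sigma> \<and> adj v (\<sigma> ! i)"
  show "Least ?P \<le> i"
    using assms by (intro Least_le) simp
  show "leftmost_nbr adj \<sigma> v = \<sigma> ! Least ?P"
    by (simp add: leftmost_nbr_def)
qed

lemma leftmost_nbr_hd:
  assumes "\<sigma> \<noteq> []" "adj v (hd \<sigma>)"
  shows "leftmost_nbr adj \<sigma> v = hd \<sigma>"
proof -
  have "0 < length \<sigma>" "adj v (\<sigma> ! 0)"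
    using assms by (simp_all add: hd_conv_nth)
  then obtain m where "m \<le> 0" "leftmost_nbr adj \<sigma> v = \<sigma> ! m"
    by (rule leftmost_nbr_before)
  then show ?thesis
    using assms(1) by (simp add: hd_conv_nth)
qed

lemma F_tree_leftmost_edge:
  "v \<in> set \<sigma> \<Longrightarrow> v \<noteq> hd \<sigma> \<Longrightarrow> {v, leftmost_nbr adj \<sigma> v} \<in> F_tree adj \<sigma>"
  unfolding F_tree_def by blast

lemma Gadj_Tv_Qv: "Gadj k l C Tv Qv" "Gadj k l C Qv Tv"
  by (simp_all add: Gadj_def E0_def GV_def)

lemma Gadj_Qv_Cl: "i \<in> {1..l} \<Longrightarrow> Gadj k l C Qv (Cl i)"
  by (auto simp: Gadj_def E0_def GV_def cl_verts_def)

lemma not_Gadj_Bv_Cl: "\<not> Gadj k l C Bv (Cl i)"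
  by (auto simp: Gadj_def E0_def lit_verts_def cl_verts_def)

lemma Gadj_Bv_imp_Gadj_Qv: "Gadj k l C Bv x \<Longrightarrow> x \<noteq> Qv \<Longrightarrow> Gadj k l C Qv x"
  by (auto simp: Gadj_def E0_def GV_def lit_verts_def cl_verts_def)

lemma Ttree_edge_Tv: "{Tv, x} \<in> Ttree k l C \<Longrightarrow> x = Bv"
  by (auto simp: Ttree_def doubleton_eq_iff Gadj_def E0_def lit_verts_def cl_verts_def)

lemma leftmost_nbr_Tv:
  assumes V: "set \<sigma> = GV k l" and F: "F_tree (Gadj k l C) \<sigma> = Ttree k l C"
  shows "leftmost_nbr (Gadj k l C) \<sigma> Tv = Bv"
proof -
  have "Tv \<in> set \<sigma>" "Qv \<in> set \<sigma>"
    using V by (auto simp: GV_def)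
  have "Tv \<noteq> hd \<sigma>"
  proof
    assume hd: "Tv = hd \<sigma>"
    then have "leftmost_nbr (Gadj k l C) \<sigma> Qv = Tv"
      using \<open>Qv \<in> set \<sigma>\<close> Gadj_Tv_Qv(2) leftmost_nbr_hd by (metis empty_iff list.set(1))
    moreover have "{Qv, leftmost_nbr (Gadj k l C) \<sigma> Qv} \<in> Ttree k l C"
      using F_tree_leftmost_edge[OF \<open>Qv \<in> set \<sigma>\<close>] F hd by auto
    ultimately have "{Tv, Qv} \<in> Ttree k l C"
      by (simp add: insert_commute)
    then show False
      using Ttree_edge_Tv by blast
  qed
  then have "{Tv, leftmost_nbr (Gadj k l C) \<sigma> Tv} \<in> Ttree k l C"
    using F_tree_leftmost_edge[OF \<open>Tv \<in> set \<sigma>\<close>] F by blast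
  then show ?thesis
    by (rule Ttree_edge_Tv)
qed

lemma Bv_before_Qv:
  assumes "is_ordering (GV k l) \<sigma>" "F_tree (Gadj k l C) \<sigma> = Ttree k l C"
    and "a < length \<sigma>" "\<sigma> ! a = Bv" "q < length \<sigma>" "\<sigma> ! q = Qv"
  shows "a < q"
proof -
  have "Gadj k l C Tv (\<sigma> ! q)"
    using assms(6) Gadj_Tv_Qv(1) by simp
  then obtain m where "m \<le> q" "leftmost_nbr (Gadj k l C) \<sigma> Tv = \<sigma> ! m"
    by (rule leftmost_nbr_before[OF assms(5)])
  moreover have "distinct \<sigma>" "set \<sigma> = GV k l"
    using assms(1) by (auto simp: is_ordering_def)
  ultimately have "m = a"
    using leftmost_nbr_Tv assms(2-5) by (metis le_less_trans nth_eq_iff_index_eq)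
  then show ?thesis
    using \<open>m \<le> q\<close> assms(4,6) by (cases "a = q") auto
qed

theorem lemma9:
  fixes k l :: nat and C :: "nat \<Rightarrow> literal list" and \<sigma> :: "vert list"
  assumes "sat3_instance k l C"
    and "is_MNS (GV k l) (Gadj k l C) \<sigma> \<or> is_MCS (GV k l) (Gadj k l C) \<sigma>"
    and "F_tree (Gadj k l C) \<sigma> = Ttree k l C"
  shows "\<forall>i \<in> {1..l}. \<forall>a < length \<sigma>. \<forall>c < length \<sigma>.
           \<sigma> ! a = Bv \<longrightarrow> \<sigma> ! c = Cl i \<longrightarrow> a < c"
proof (intro ballI allI impI)
  fix i a c
  assume i: "i \<in> {1..l}" and a: "a < length \<sigma>" "\<sigma> ! a = Bv" and "\<sigma> ! c = Cl i"
  let ?adj = "Gadj k l C"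
  have MNS: "is_MNS (GV k l) ?adj \<sigma>"
    using assms(2) MCS_imp_MNS by blast
  then have ord: "is_ordering (GV k l) \<sigma>"
    by (simp add: is_MNS_def)
  then have "Qv \<in> set \<sigma>"
    by (simp add: is_ordering_def GV_def)
  then obtain q where q: "q < length \<sigma>" "\<sigma> ! q = Qv"
    by (auto simp: in_set_conv_nth)
  have "a < q"
    using Bv_before_Qv[OF ord assms(3) a q] .
  show "a < c"
  proof (rule ccontr)
    assume "\<not> a < c"
    with a \<open>\<sigma> ! c = Cl i\<close> have "c < a"
      by (metis linorder_neqE_nat vert.distinct)
    moreover have "?adj (\<sigma> ! q) (\<sigma> ! c)"
      using q(2) \<open>\<sigma> ! c = Cl i\<close> Gadj_Qv_Cl[OF i] by simp
    moreover have "?adj (\<sigma> ! q) x" if "?adj (\<sigma> ! a) x" "x \<noteq> \<sigma> ! q" for x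
      using that a(2) q(2) Gadj_Bv_imp_Gadj_Qv by simp
    ultimately have "?adj (\<sigma> ! a) (\<sigma> ! c)"
      using MNS_dominated_vertex_nbrs[OF MNS \<open>a < q\<close> q(1)] by blast
    then show False
      using a(2) \<open>\<sigma> ! c = Cl i\<close> not_Gadj_Bv_Cl by simp
  qed
qed

end
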